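(* For a complex parameter $\nu$ such that all terms are defined, and complex $x\neq0$, $$e^{-x}\sum_{n\ge0}\frac{x^n}{(1+\nu)_n}L_n^{(\nu+1)}(x)=\Gamma(\nu+1)\,x^{-\nu-1}\left\{(x+\nu+1)J_{\nu+1}(2x)-xJ_{\nu+2}(2x)\right\}.$$
   Context: $(a)_k=a(a+1)\cdots(a+k-1)$ is the Pochhammer symbol. $L_n^{(\alpha)}(x)=\frac{(\alpha+1)_n}{n!}\,{}_1F_1\!\left[\begin{matrix}-n\\ \alpha+1\end{matrix};x\right]=\frac{(\alpha+1)_n}{n!}\sum_{k=0}^n\frac{(-n)_k}{(\alpha+1)_k}\frac{x^k}{k!}$ is the generalized Laguerre polynomial, and $J_\alpha$ is the Bessel function of the first kind of order $\alpha$. *)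

theory Defs
  imports "HOL-Analysis.Analysis"
begin

definition laguerre :: "nat \<Rightarrow> complex \<Rightarrow> complex \<Rightarrow> complex" where
  "laguerre n \<alpha> x =
     pochhammer (\<alpha> + 1) n / fact n *
     (\<Sum>k\<le>n. pochhammer (- of_nat n) k / pochhammer (\<alpha> + 1) k * x ^ k / fact k)"

text \<open>Bessel function of the first kind of complex order, principal branch:
  J_a(z) = (z/2)^a * sum_k (-1)^k (z/2)^(2k) / (k! Gamma(k+a+1)), with 1/Gamma = rGamma.\<close>
definition besselJ :: "complex \<Rightarrow> complex \<Rightarrow> complex" where
  "besselJ a z = (z / 2) powr a *
     (\<Sum>k. (-1) ^ k * (z / 2) ^ (2 * k) * rGamma (of_nat k + a + 1) / fact k)"

end

theory Submission imports Defs begin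

(* Put b = \<nu> + 1 and expand L_n^(b)(x) = (b+1)_n/n! \<Sum>_k (-n)_k/(b+1)_k x^k/k!. Writing
   b + n = (b + k) + (n - k), the n-th term x^n/(b)_n L_n^(b)(x) splits into two convolutions, so the
   series is the sum of the Cauchy products of 0F1(;b;-x^2) with e^x = \<Sum> x^m/m! and of
   0F1(;b+1;-x^2)/b with x e^x = \<Sum> m x^m/m!. After the factor e^-x it becomes
   0F1(;b;-x^2) + x/b 0F1(;b+1;-x^2). Since J_a(2x) = x^a 0F1(;a+1;-x^2)/\<Gamma>(a+1), the Bessel side
   is (x+b)/b 0F1(;b+1;-x^2) - x^2/(b(b+1)) 0F1(;b+2;-x^2), and the two agree by the contiguous
   relation 0F1(;b;z) - 0F1(;b+1;z) = z/(b(b+1)) 0F1(;b+2;z). *)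

lemma summable_norm_ratio_tendsto_0:
  fixes f r :: "nat \<Rightarrow> 'a::real_normed_div_algebra"
  assumes ratio: "\<And>n. f (Suc n) = f n * r n" and lim: "r \<longlonglongrightarrow> 0"
  shows "summable (\<lambda>n. norm (f n))"
proof -
  obtain N where N: "\<And>n. n \<ge> N \<Longrightarrow> norm (r n) \<le> 1/2"
    using lim unfolding LIMSEQ_iff by (metis diff_zero half_gt_zero less_eq_real_def zero_less_one)
  show ?thesis
  proof (rule summable_ratio_test[of "1/2" N])
    fix n assume "n \<ge> N"
    then show "norm (norm (f (Suc n))) \<le> 1/2 * norm (norm (f n))"
      using N mult_left_mono[of "norm (r n)" "1/2" "norm (f n)"] by (simp add: ratio norm_mult)
  qed simp
qed

lemma all_pochhammer_neq_0_iff: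
  fixes b :: "'a::field_char_0"
  shows "(\<forall>n. pochhammer b n \<noteq> 0) \<longleftrightarrow> b \<notin> \<int>\<^sub>\<le>\<^sub>0"
proof
  assume "\<forall>n. pochhammer b n \<noteq> 0"
  then show "b \<notin> \<int>\<^sub>\<le>\<^sub>0"
    by (auto elim!: nonpos_Ints_cases' simp: pochhammer_eq_0_iff)
qed (auto dest: pochhammer_eq_0_imp_nonpos_Int)

lemma Gamma_mult_rGamma_add_of_nat:
  fixes b :: "'a::Gamma"
  assumes "b \<notin> \<int>\<^sub>\<le>\<^sub>0"
  shows "Gamma b * rGamma (b + of_nat n) = 1 / pochhammer b n"
proof -
  have "Gamma b * rGamma b = 1"
    using Gamma_nonzero[OF assms] by (simp add: rGamma_inverse_Gamma)
  moreover have "pochhammer b n \<noteq> 0"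
    using assms by (auto dest: pochhammer_eq_0_imp_nonpos_Int)
  ultimately show ?thesis
    by (simp add: pochhammer_rGamma[of b n] field_simps)
qed

lemma power_neg_square:
  fixes w :: "'a::comm_ring_1"
  shows "(- (w ^ 2)) ^ k = (-1) ^ k * w ^ (2 * k)"
  by (subst power_minus) (simp add: power_mult)

(* The hypergeometric series 0F1(;b;z); if b is a nonpositive integer, x / 0 = 0 truncates it. *)
definition hyp0F1 :: "'a::{real_normed_field,banach} \<Rightarrow> 'a \<Rightarrow> 'a" where
  "hyp0F1 b z = (\<Sum>k. z ^ k / (pochhammer b k * fact k))"

lemma hyp0F1_term_Suc:
  fixes b z :: "'a::field_char_0"
  shows "z ^ Suc k / (pochhammer b (Suc k) * fact (Suc k)) =
    z ^ k / (pochhammer b k * fact k) * (z / ((b + of_nat k) * (of_nat k + 1)))"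
  by (simp add: pochhammer_Suc divide_inverse ac_simps)

lemma summable_norm_hyp0F1:
  fixes b z :: "'a::{real_normed_field,banach}"
  shows "summable (\<lambda>k. norm (z ^ k / (pochhammer b k * fact k)))"
proof (rule summable_norm_ratio_tendsto_0[where r = "\<lambda>k. z / ((b + of_nat k) * (of_nat k + 1))"])
  show "z ^ Suc k / (pochhammer b (Suc k) * fact (Suc k)) =
      z ^ k / (pochhammer b k * fact k) * (z / ((b + of_nat k) * (of_nat k + 1)))" for k
    by (rule hyp0F1_term_Suc)
  have "filterlim (\<lambda>k. b + of_nat k) at_infinity sequentially"
    by (rule tendsto_add_filterlim_at_infinity[OF tendsto_const tendsto_of_nat])
  moreover have "filterlim (\<lambda>k. of_nat k + 1 :: 'a) at_infinity sequentially"
    by (rule tendsto_add_filterlim_at_infinity') (auto intro: tendsto_of_nat)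
  ultimately have "filterlim (\<lambda>k. (b + of_nat k) * (of_nat k + 1)) at_infinity sequentially"
    by (rule filterlim_at_infinity_times)
  then show "(\<lambda>k. z / ((b + of_nat k) * (of_nat k + 1))) \<longlonglongrightarrow> 0"
    by (rule tendsto_divide_0[OF tendsto_const])
qed

lemma hyp0F1_sums: "(\<lambda>k. z ^ k / (pochhammer b k * fact k)) sums hyp0F1 b z"
  unfolding hyp0F1_def by (rule summable_sums[OF summable_norm_cancel[OF summable_norm_hyp0F1]])

lemma hyp0F1_contiguous:
  fixes b z :: "'a::{real_normed_field,banach}"
  assumes b: "b \<notin> \<int>\<^sub>\<le>\<^sub>0"
  shows "hyp0F1 b z - hyp0F1 (b + 1) z = z / (b * (b + 1)) * hyp0F1 (b + 2) z"
proof -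
  define t where "t c k = z ^ k / (pochhammer c k * fact k)" for c k
  have nz: "b + of_nat k \<noteq> 0" "pochhammer (b + 1) k \<noteq> 0" for k
    using b by (auto dest!: plus_of_nat_eq_0_imp pochhammer_eq_0_imp_nonpos_Int
        plus_one_in_nonpos_Ints_imp)
  have shift: "t b (Suc k) - t (b + 1) (Suc k) = z / (b * (b + 1)) * t (b + 2) k" for k
  proof -
    define R where "R = pochhammer (b + 1) k"
    define c where "c = 1 + (of_nat k :: 'a)"
    define d where "d = b + c"
    define f where "f = (fact k :: 'a)"
    define e where "e = b + 1"
    have rec0: "pochhammer b (Suc k) = b * R"
      unfolding R_def by (rule pochhammer_rec)
    have rec1: "pochhammer (b + 1) (Suc k) = R * d"
      unfolding R_def d_def c_def by (simp add: pochhammer_Suc add_ac)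
    have "(b + 1) * pochhammer (b + 2) k = R * d"
      using pochhammer_rec[of "b + 1" k] unfolding rec1 by (simp add: add.assoc one_add_one)
    then have rec2: "pochhammer (b + 2) k = R * d / e"
      using nz(1)[of 1] unfolding e_def by (simp add: field_simps)
    have fact_Suc_k: "fact (Suc k) = c * f"
      by (simp add: c_def f_def)
    have "c \<noteq> 0"
      unfolding c_def by (metis of_nat_Suc of_nat_eq_0_iff add.commute nat.distinct(1))
    moreover have "b \<noteq> 0" "e \<noteq> 0" "d \<noteq> 0" "R \<noteq> 0" "f \<noteq> 0"
      using nz(1)[of 0] nz(1)[of 1] nz(1)[of "Suc k"] nz(2)[of k]
      by (simp_all add: d_def c_def e_def R_def f_def add_ac)
    ultimately have "t b (Suc k) - t (b + 1) (Suc k) = z * z ^ k / (R * c * f) * (1 / b - 1 / d)"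
      unfolding t_def rec0 rec1 fact_Suc_k by (simp add: field_simps)
    also have "1 / b - 1 / d = c / (b * d)"
      using \<open>b \<noteq> 0\<close> \<open>d \<noteq> 0\<close> by (simp add: field_simps d_def)
    also have "z * z ^ k / (R * c * f) * (c / (b * d)) = z / (b * (b + 1)) * t (b + 2) k"
      unfolding t_def rec2 f_def[symmetric] e_def[symmetric]
      using \<open>c \<noteq> 0\<close> \<open>b \<noteq> 0\<close> \<open>e \<noteq> 0\<close> \<open>d \<noteq> 0\<close> \<open>R \<noteq> 0\<close> \<open>f \<noteq> 0\<close>
      by (simp add: field_simps)
    finally show ?thesis .
  qed
  have "(\<lambda>k. t b (Suc k) - t (b + 1) (Suc k)) sums (z / (b * (b + 1)) * hyp0F1 (b + 2) z)"
    unfolding shift by (unfold t_def) (intro sums_mult hyp0F1_sums)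
  then have "(\<lambda>k. t b k - t (b + 1) k) sums (z / (b * (b + 1)) * hyp0F1 (b + 2) z)"
    by (subst (asm) sums_Suc_iff) (simp add: t_def)
  moreover have "(\<lambda>k. t b k - t (b + 1) k) sums (hyp0F1 b z - hyp0F1 (b + 1) z)"
    unfolding t_def by (intro sums_diff hyp0F1_sums)
  ultimately show ?thesis by (metis sums_unique2)
qed

lemma besselJ_eq_hyp0F1:
  assumes "a + 1 \<notin> \<int>\<^sub>\<le>\<^sub>0"
  shows "besselJ a z = (z / 2) powr a * rGamma (a + 1) * hyp0F1 (a + 1) (- ((z / 2) ^ 2))"
proof -
  have summand: "(-1) ^ k * (z / 2) ^ (2 * k) * rGamma (of_nat k + a + 1) / fact k =
      rGamma (a + 1) * ((- ((z / 2) ^ 2)) ^ k / (pochhammer (a + 1) k * fact k))" for k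
  proof -
    have P: "pochhammer (a + 1) k \<noteq> 0"
      using assms by (auto dest: pochhammer_eq_0_imp_nonpos_Int)
    have shift: "of_nat k + a + 1 = a + 1 + of_nat k"
      by (simp add: add_ac)
    have rGamma_shift: "rGamma (a + 1 + of_nat k) = rGamma (a + 1) / pochhammer (a + 1) k"
      by (subst pochhammer_rGamma[of "a + 1" k]) (rule nonzero_mult_div_cancel_left[OF P, symmetric])
    show ?thesis
      unfolding shift rGamma_shift power_neg_square using P by (simp add: field_simps)
  qed
  show ?thesis
    unfolding besselJ_def hyp0F1_def summand
      suminf_mult[OF summable_norm_cancel[OF summable_norm_hyp0F1]]
    by (simp only: mult.assoc)
qed

lemma exp_series_sums:
  fixes x :: "'a::{real_normed_field,banach}"
  shows "(\<lambda>n. x ^ n / fact n) sums exp x"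
  using exp_converges[of x] by (simp add: scaleR_conv_of_real divide_inverse mult.commute)

lemma summable_norm_exp_series:
  fixes x :: "'a::{real_normed_field,banach}"
  shows "summable (\<lambda>n. norm (x ^ n / fact n))"
  using summable_norm_exp[of x] by (simp add: scaleR_conv_of_real divide_inverse mult.commute)

lemma sums_of_nat_mult_exp_series:
  fixes x :: "'a::{real_normed_field,banach}"
  shows "(\<lambda>n. of_nat n * x ^ n / fact n) sums (x * exp x)"
proof -
  have "of_nat (Suc n) * x ^ Suc n / fact (Suc n) = x * (x ^ n / fact n)" for n
    by (simp add: field_simps del: of_nat_Suc)
  then have "(\<lambda>n. of_nat (Suc n) * x ^ Suc n / fact (Suc n)) sums (x * exp x)"
    by (simp only:) (intro sums_mult exp_series_sums)
  then show ?thesis by (subst (asm) sums_Suc_iff) simp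
qed

lemma summable_norm_of_nat_mult_exp_series:
  fixes x :: "'a::{real_normed_field,banach}"
  shows "summable (\<lambda>n. norm (of_nat n * x ^ n / fact n))"
  using sums_summable[OF sums_of_nat_mult_exp_series[of "norm x"]]
  by (simp add: norm_mult norm_divide norm_power)

lemma laguerre_term_split:
  fixes b x :: complex
  assumes b: "b \<notin> \<int>\<^sub>\<le>\<^sub>0" and "k \<le> n"
  shows "x ^ n / pochhammer b n *
      (pochhammer (b + 1) n / fact n *
        (pochhammer (- of_nat n) k / pochhammer (b + 1) k * x ^ k / fact k)) =
    (- (x ^ 2)) ^ k / (pochhammer b k * fact k) * (x ^ (n - k) / fact (n - k)) +
    (- (x ^ 2)) ^ k / (pochhammer (b + 1) k * fact k) / b *
      (of_nat (n - k) * x ^ (n - k) / fact (n - k))"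
proof -
  define m where "m = n - k"
  have n: "n = k + m" using \<open>k \<le> n\<close> by (simp add: m_def)
  have nz: "b + of_nat j \<noteq> 0" "pochhammer b j \<noteq> 0" for j
    using b by (auto dest!: plus_of_nat_eq_0_imp pochhammer_eq_0_imp_nonpos_Int)
  have shift: "pochhammer (b + 1) j = pochhammer b j * (b + of_nat j) / b" for j
    using pochhammer_rec[of b j] pochhammer_Suc[of b j] nz(1)[of 0] by (simp add: field_simps)
  define d where "d = b + of_nat k"
  have shift_k: "pochhammer (b + 1) k = pochhammer b k * d / b"
    unfolding d_def by (rule shift)
  have shift_n: "pochhammer (b + 1) n = pochhammer b n * (d + of_nat m) / b"
    unfolding d_def shift by (simp add: n add.assoc)
  have falling: "pochhammer (- of_nat n) k = (-1) ^ k * fact n / (fact m :: complex)"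
  proof -
    have "pochhammer (- (of_nat n :: complex)) k = (-1) ^ k * pochhammer (1 + of_nat m) k"
      by (subst pochhammer_minus) (simp add: n algebra_simps)
    moreover have "(fact n :: complex) = fact m * pochhammer (1 + of_nat m) k"
      using pochhammer_product'[of "1::complex" m k] by (simp add: n pochhammer_fact add_ac)
    ultimately show ?thesis by simp
  qed
  have powers: "x ^ n = x ^ k * x ^ m" "x ^ (2 * k) = x ^ k * x ^ k"
    by (simp_all add: n power_add mult_2)
  have "b \<noteq> 0" "d \<noteq> 0"
    using nz(1)[of 0] nz(1)[of k] by (simp_all add: d_def)
  then show ?thesis
    unfolding m_def[symmetric] shift_k shift_n falling power_neg_square powers
    using nz(2)[of k] nz(2)[of n] by (simp add: field_simps)
qed

lemma sums_laguerre_series: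
  fixes b x :: complex
  assumes b: "b \<notin> \<int>\<^sub>\<le>\<^sub>0"
  shows "(\<lambda>n. x ^ n / pochhammer b n * laguerre n b x) sums
    (exp x * (hyp0F1 b (- (x ^ 2)) + x / b * hyp0F1 (b + 1) (- (x ^ 2))))"
proof -
  define A where "A k = (- (x ^ 2)) ^ k / (pochhammer b k * fact k)" for k
  define A' where "A' k = (- (x ^ 2)) ^ k / (pochhammer (b + 1) k * fact k) / b" for k
  define B where "B m = x ^ m / fact m" for m
  define C where "C m = of_nat m * x ^ m / fact m" for m
  have sA: "summable (\<lambda>k. norm (A k))" and sA': "summable (\<lambda>k. norm (A' k))"
    unfolding A_def A'_def norm_divide[of _ b] by (intro summable_divide summable_norm_hyp0F1)+
  have sB: "summable (\<lambda>k. norm (B k))" and sC: "summable (\<lambda>k. norm (C k))"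
    unfolding B_def C_def by (rule summable_norm_exp_series summable_norm_of_nat_mult_exp_series)+
  have A: "hyp0F1 b (- (x ^ 2)) = suminf A" and A': "hyp0F1 (b + 1) (- (x ^ 2)) / b = suminf A'"
    unfolding A_def A'_def by (intro sums_unique sums_divide hyp0F1_sums)+
  have B: "exp x = suminf B" and C: "x * exp x = suminf C"
    unfolding B_def C_def by (intro sums_unique exp_series_sums sums_of_nat_mult_exp_series)+
  have AB: "(\<lambda>n. \<Sum>i\<le>n. A i * B (n - i)) sums (hyp0F1 b (- (x ^ 2)) * exp x)"
    unfolding A B by (rule Cauchy_product_sums[OF sA sB])
  have A'C: "(\<lambda>n. \<Sum>i\<le>n. A' i * C (n - i)) sums (hyp0F1 (b + 1) (- (x ^ 2)) / b * (x * exp x))"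
    unfolding A' C by (rule Cauchy_product_sums[OF sA' sC])
  have "x ^ n / pochhammer b n * laguerre n b x =
      (\<Sum>i\<le>n. A i * B (n - i)) + (\<Sum>i\<le>n. A' i * C (n - i))" for n
    unfolding laguerre_def sum_distrib_left sum.distrib[symmetric] A_def A'_def B_def C_def
    by (intro sum.cong refl laguerre_term_split[OF b]) simp
  moreover have "exp x * (hyp0F1 b (- (x ^ 2)) + x / b * hyp0F1 (b + 1) (- (x ^ 2))) =
      hyp0F1 b (- (x ^ 2)) * exp x + hyp0F1 (b + 1) (- (x ^ 2)) / b * (x * exp x)"
    by (simp add: algebra_simps)
  ultimately show ?thesis
    using sums_add[OF AB A'C] by simp
qed

lemma besselJ_combination_eq_hyp0F1:
  fixes b x :: complex
  assumes b: "b \<notin> \<int>\<^sub>\<le>\<^sub>0" and x: "x \<noteq> 0"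
  shows "Gamma b * x powr (- b) * ((x + b) * besselJ b (2 * x) - x * besselJ (b + 1) (2 * x)) =
    hyp0F1 b (- (x ^ 2)) + x / b * hyp0F1 (b + 1) (- (x ^ 2))"
proof -
  define F0 where "F0 = hyp0F1 b (- (x ^ 2))"
  define F1 where "F1 = hyp0F1 (b + 1) (- (x ^ 2))"
  define F2 where "F2 = hyp0F1 (b + 2) (- (x ^ 2))"
  have b1: "b + 1 \<notin> \<int>\<^sub>\<le>\<^sub>0" "b + 1 + 1 \<notin> \<int>\<^sub>\<le>\<^sub>0"
    using b plus_one_in_nonpos_Ints_imp by blast+
  have nz: "b \<noteq> 0" "b + 1 \<noteq> 0"
    using b b1 by auto
  have two: "b + 1 + 1 = b + 2"
    by (simp add: add.assoc one_add_one)
  have J1: "besselJ b (2 * x) = x powr b * rGamma (b + 1) * F1"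
    using besselJ_eq_hyp0F1[OF b1(1)] by (simp add: F1_def)
  have J2: "besselJ (b + 1) (2 * x) = x powr (b + 1) * rGamma (b + 2) * F2"
    using besselJ_eq_hyp0F1[OF b1(2)] unfolding two by (simp add: F2_def)
  have Gamma1: "Gamma b * rGamma (b + 1) = 1 / b"
    using Gamma_mult_rGamma_add_of_nat[OF b, of 1] by simp
  have Gamma2: "Gamma b * rGamma (b + 2) = 1 / (b * (b + 1))"
    using Gamma_mult_rGamma_add_of_nat[OF b, of 2]
    by (simp add: numeral_2_eq_2 pochhammer_Suc add.assoc one_add_one)
  have powr1: "x powr (- b) * x powr b = 1" and powr2: "x powr (- b) * x powr (b + 1) = x"
    using x by (simp_all add: powr_add[symmetric])
  have F0: "F0 = F1 - x ^ 2 / (b * (b + 1)) * F2"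
    using hyp0F1_contiguous[OF b, of "- (x ^ 2)"] unfolding F0_def F1_def F2_def
    by (simp add: algebra_simps)
  have "Gamma b * x powr (- b) * ((x + b) * besselJ b (2 * x) - x * besselJ (b + 1) (2 * x)) =
      (x + b) * (x powr (- b) * x powr b) * (Gamma b * rGamma (b + 1)) * F1 -
      x * (x powr (- b) * x powr (b + 1)) * (Gamma b * rGamma (b + 2)) * F2"
    unfolding J1 J2 by (simp add: algebra_simps)
  also have "\<dots> = F0 + x / b * F1"
    unfolding powr1 powr2 Gamma1 Gamma2 F0 using nz by (simp add: field_simps power2_eq_square)
  finally show ?thesis unfolding F0_def F1_def .
qed

theorem mainTheorem9:
  fixes \<nu> x :: complex
  assumes "\<forall>n. pochhammer (1 + \<nu>) n \<noteq> 0"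
    and "x \<noteq> 0"
  shows "(\<lambda>n. exp (- x) * (x ^ n / pochhammer (1 + \<nu>) n * laguerre n (\<nu> + 1) x)) sums
           (Gamma (\<nu> + 1) * x powr (- \<nu> - 1) *
              ((x + \<nu> + 1) * besselJ (\<nu> + 1) (2 * x) - x * besselJ (\<nu> + 2) (2 * x)))"
proof -
  have b: "\<nu> + 1 \<notin> \<int>\<^sub>\<le>\<^sub>0"
    using assms(1) by (simp add: all_pochhammer_neq_0_iff add.commute)
  have "(\<lambda>n. exp (- x) * (x ^ n / pochhammer (\<nu> + 1) n * laguerre n (\<nu> + 1) x)) sums
      (exp x * exp (- x) * (hyp0F1 (\<nu> + 1) (- (x ^ 2)) + x / (\<nu> + 1) * hyp0F1 (\<nu> + 1 + 1) (- (x ^ 2))))"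
    using sums_mult[OF sums_laguerre_series[OF b], of "exp (- x)"] by (simp add: ac_simps)
  also have "\<dots> = Gamma (\<nu> + 1) * x powr (- (\<nu> + 1)) *
      ((x + (\<nu> + 1)) * besselJ (\<nu> + 1) (2 * x) - x * besselJ (\<nu> + 1 + 1) (2 * x))"
    by (simp only: besselJ_combination_eq_hyp0F1[OF b assms(2)] exp_minus_inverse mult_1_left)
  moreover have "\<nu> + 2 = \<nu> + 1 + 1" "- \<nu> - 1 = - (\<nu> + 1)" "x + \<nu> + 1 = x + (\<nu> + 1)"
    by simp_all
  ultimately show ?thesis
    by (simp only: add.commute[of 1 \<nu>])
qed

end
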